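(* Let $\tilde A,\tilde B\in\mathbb{R}^{m\times n}$ and suppose there is $\gamma\in\mathbb{R}_{>0}$ with $\tilde C:=\tilde A+\gamma\tilde B=D+\hat{\mathbf{r}}\hat{\mathbf{c}}^\mathsf{T}$, where $D\in\mathcal{M}_{m\times n}(\mathbb{R})$, $\operatorname{rank}(D)<2$, $\operatorname{rank}(\tilde C)<3$, $\tilde C\notin\mathcal{M}_{m\times n}(\mathbb{R})$, $\hat{\mathbf{r}}\in\mathbb{R}^m$, $\hat{\mathbf{c}}\in\mathbb{R}^n$. Define $(\hat A,\hat B)$ as follows: (1) if $\operatorname{rank}(D)=0$: $\hat A=\tilde A$, $\hat B=\gamma\tilde B$; (2) if $\operatorname{rank}(D)=1$ and $\mathbf{1}_m\in\operatorname{span}(\tilde C)$: take any $\mathbf{x}_1$ with $\tilde C\mathbf{x}_1=\mathbf{1}_m$ and any $\mathbf{y}_1$ with $w_1=\mathbf{y}_1^\mathsf{T}\tilde C\mathbf{x}_1\ne0$, let $\hat{\mathbf{u}}^\mathsf{T}=w_1^{-1}\mathbf{y}_1^\mathsf{T}\tilde C$, and set $\hat A=\tilde A-\mathbf{1}_m\hat{\mathbf{u}}^\mathsf{T}$, $\hat B=\gamma\tilde B$; (3) if $\operatorname{rank}(D)=1$ and $\mathbf{1}_n\in\operatorname{span}(\tilde C^\mathsf{T})$: take any $\mathbf{y}_1$ with $\mathbf{y}_1^\mathsf{T}\tilde C=\mathbf{1}_n^\mathsf{T}$ and any $\mathbf{x}_1$ with $w_1=\mathbf{y}_1^\mathsf{T}\tilde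 C\mathbf{x}_1\ne0$, let $\hat{\mathbf{v}}=w_1^{-1}\tilde C\mathbf{x}_1$, and set $\hat A=\tilde A$, $\hat B=\gamma\tilde B-\hat{\mathbf{v}}\mathbf{1}_n^\mathsf{T}$. In each case the required vectors exist, $\operatorname{rank}(\hat A+\hat B)=1$, and $(m,n,\tilde A,\tilde B)$ is strategically equivalent to the rank-1 game $(m,n,\hat A,\hat B)$.
   Context: $\mathbf{1}_k$ is the all-ones vector of length $k$; $\operatorname{span}(C)$ is the column space of $C$. $\mathcal{M}_{m\times n}(\mathbb{R})=\{M\in\mathbb{R}^{m\times n}: M=\mathbf{1}_m\mathbf{u}^\mathsf{T}+\mathbf{v}\mathbf{1}_n^\mathsf{T}\text{ for some }\mathbf{u}\in\mathbb{R}^n,\mathbf{v}\in\mathbb{R}^m\}$. A bimatrix game $(m,n,A,B)$ has payoff matrices $A,B$; two games are strategically equivalent iff they have the same set of (mixed) Nash equilibria; a game is rank-1 if $\operatorname{rank}(A+B)=1$. *)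

theory Defs
  imports "HOL-Analysis.Analysis"
begin

definition ones :: "real ^ 'k" where
  "ones = (\<chi> i. 1)"

definition outer :: "real ^ 'm \<Rightarrow> real ^ 'n \<Rightarrow> real ^ 'n ^ 'm" where
  "outer u v = (\<chi> i j. u $ i * v $ j)"

definition Mset :: "(real ^ 'n ^ 'm) set" where
  "Mset = {M. \<exists>(u::real^'n) (v::real^'m). M = outer ones u + outer v ones}"

definition mixed_strategies :: "(real ^ 'k) set" where
  "mixed_strategies = {x. (\<forall>i. 0 \<le> x $ i) \<and> (\<Sum>i\<in>UNIV. x $ i) = 1}"

definition nash_equilibria :: "real ^ 'n ^ 'm \<Rightarrow> real ^ 'n ^ 'm \<Rightarrow> ((real ^ 'm) \<times> (real ^ 'n)) set" where
  "nash_equilibria A B = {(x, y). x \<in> mixed_strategies \<and> y \<in> mixed_strategies \<and>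
      (\<forall>x'\<in>mixed_strategies. x' \<bullet> (A *v y) \<le> x \<bullet> (A *v y)) \<and>
      (\<forall>y'\<in>mixed_strategies. x \<bullet> (B *v y') \<le> x \<bullet> (B *v y))}"

definition strategically_equivalent ::
  "real ^ 'n ^ 'm \<Rightarrow> real ^ 'n ^ 'm \<Rightarrow> real ^ 'n ^ 'm \<Rightarrow> real ^ 'n ^ 'm \<Rightarrow> bool" where
  "strategically_equivalent A B A' B' \<longleftrightarrow> nash_equilibria A B = nash_equilibria A' B'"

definition rank1_game :: "real ^ 'n ^ 'm \<Rightarrow> real ^ 'n ^ 'm \<Rightarrow> bool" where
  "rank1_game A B \<longleftrightarrow> rank (A + B) = 1"

end

theory Submission
  imports Defs
begin

text \<open>
  Adding a matrix \<open>\<one>\<^sub>m u\<^sup>T\<close> to the row player's payoffs shifts every payoff against a fixed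
  column strategy by the same constant, and so does adding \<open>v \<one>\<^sub>n\<^sup>T\<close> to the column player's
  payoffs against a fixed row strategy; together with scaling by \<open>\<gamma> > 0\<close> this leaves all
  best responses, hence all Nash equilibria, unchanged. For the rank, Wedderburn's rank
  reduction formula says that subtracting \<open>(C x)(y\<^sup>T C)/(y\<^sup>T C x)\<close> from \<open>C\<close> lowers the rank by
  exactly one. In cases (2) and (3) the subtracted matrix is \<open>\<one>\<^sub>m u\<^sup>T\<close> resp. \<open>v \<one>\<^sub>n\<^sup>T\<close>; the
  result has rank \<open>rank C - 1 \<le> 1\<close>, and it is non-zero because \<open>C\<close> is not of that form.
  In case (1), \<open>C = r c\<^sup>T\<close> is a non-zero outer product.
\<close>

lemma outer_mulv: "outer a b *v z = (b \<bullet> z) *\<^sub>R a"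
  by (simp add: outer_def matrix_vector_mult_def inner_vec_def vec_eq_iff sum_distrib_left
      mult.commute mult.left_commute)

lemma outer_scaleR_left: "outer (k *\<^sub>R a) b = k *\<^sub>R outer a b"
  and outer_scaleR_right: "outer a (k *\<^sub>R b) = k *\<^sub>R outer a b"
  by (simp_all add: outer_def vec_eq_iff)

lemma outer_zero_left [simp]: "outer 0 b = 0"
  and outer_zero_right [simp]: "outer a 0 = 0"
  by (simp_all add: outer_def vec_eq_iff)

lemma inner_ones_self_neq_0: "(ones :: real ^ 'k) \<bullet> ones \<noteq> 0"
  by (simp add: ones_def inner_vec_def)

lemma outer_ones_left_in_Mset: "outer ones u \<in> Mset"
  unfolding Mset_def by (rule CollectI, intro exI[of _ u] exI[of _ 0]) simp

lemma outer_ones_right_in_Mset: "outer v ones \<in> Mset"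
  unfolding Mset_def by (rule CollectI, intro exI[of _ 0] exI[of _ v]) simp

lemma span_columns_eq_range:
  fixes A :: "real ^ 'n ^ 'm"
  shows "span (columns A) = range ((*v) A)"
proof
  show "span (columns A) \<subseteq> range ((*v) A)"
    by (rule span_minimal) (auto simp: columns_image_basis linear_subspace_image)
  show "range ((*v) A) \<subseteq> span (columns A)"
    using matrix_vector_mult_in_columnspace by blast
qed

lemma mixed_strategy_inner_ones: "x \<in> mixed_strategies \<Longrightarrow> ones \<bullet> x = 1"
  by (simp add: mixed_strategies_def ones_def inner_vec_def)

lemma nash_equilibria_shift_scale:
  fixes A B :: "real ^ 'n ^ 'm"
  assumes "\<gamma> > 0"
  shows "nash_equilibria A B = nash_equilibria (A - outer ones u) (\<gamma> *\<^sub>R B - outer v ones)"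
proof -
  have row: "x' \<bullet> ((A - outer ones u) *v y) = x' \<bullet> (A *v y) - u \<bullet> y"
    if "x' \<in> mixed_strategies" for x' y
    using mixed_strategy_inner_ones[OF that]
    by (simp add: matrix_vector_mult_diff_rdistrib outer_mulv inner_diff_right inner_commute)
  have col: "x \<bullet> ((\<gamma> *\<^sub>R B - outer v ones) *v y') = \<gamma> * (x \<bullet> (B *v y')) - x \<bullet> v"
    if "y' \<in> mixed_strategies" for x y'
    using mixed_strategy_inner_ones[OF that]
    by (simp add: matrix_vector_mult_diff_rdistrib outer_mulv inner_diff_right
        scaleR_matrix_vector_assoc[symmetric])
  show ?thesis
    unfolding nash_equilibria_def using assms by (auto simp: row col)
qed

lemma rank_outer_le_1: "rank (outer a b :: real ^ 'n ^ 'm) \<le> 1"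
proof -
  have "range ((*v) (outer a b)) \<subseteq> span {a}"
    by (auto simp: outer_mulv span_mul span_base)
  hence "rank (outer a b) \<le> dim (span {a})"
    unfolding rank_dim_range by (rule dim_subset)
  also have "\<dots> \<le> 1"
    by (simp add: dim_insert)
  finally show ?thesis .
qed

lemma rank_outer_eq_1: "outer a b \<noteq> (0 :: real ^ 'n ^ 'm) \<Longrightarrow> rank (outer a b) = 1"
  using rank_outer_le_1[of a b] rank_eq_0[of "outer a b"] by linarith

lemma rank_Wedderburn_reduction:
  fixes C :: "real ^ 'n ^ 'm" and x :: "real ^ 'n" and y :: "real ^ 'm"
  defines "w \<equiv> (y v* C) \<bullet> x"
  assumes "w \<noteq> 0"
  shows "rank (C - (1 / w) *\<^sub>R outer (C *v x) (y v* C)) + 1 = rank C"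
proof -
  define N where "N = C - (1 / w) *\<^sub>R outer (C *v x) (y v* C)"
  have N_mulv: "N *v z = C *v (z - ((y v* C) \<bullet> z / w) *\<^sub>R x)" for z
    by (simp add: N_def matrix_vector_mult_diff_rdistrib matrix_vector_mult_diff_distrib
        outer_mulv scaleR_matrix_vector_assoc[symmetric] matrix_vector_mult_scaleR)
  have "y \<bullet> (N *v z) = 0" for z
    using \<open>w \<noteq> 0\<close> by (simp add: N_mulv matrix_vector_mult_diff_distrib matrix_vector_mult_scaleR
        inner_diff_right dot_lmul_matrix[symmetric] w_def)
  moreover have "y \<bullet> (C *v x) \<noteq> 0"
    using \<open>w \<noteq> 0\<close> by (simp add: w_def dot_lmul_matrix)
  ultimately have "C *v x \<notin> range ((*v) N)"
    by (metis rangeE)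
  moreover have "span (range ((*v) N)) = range ((*v) N)"
    by (rule span_eq_iff[THEN iffD2]) (simp add: linear_subspace_image)
  ultimately have Cx_notin: "C *v x \<notin> span (range ((*v) N))"
    by metis
  have "range ((*v) C) \<subseteq> span (insert (C *v x) (range ((*v) N)))"
  proof
    fix v assume "v \<in> range ((*v) C)"
    then obtain z where v: "v = C *v z" by blast
    have "v = N *v z + ((y v* C) \<bullet> z / w) *\<^sub>R (C *v x)"
      using v by (simp add: N_mulv matrix_vector_mult_diff_distrib matrix_vector_mult_scaleR)
    moreover have "N *v z \<in> span (insert (C *v x) (range ((*v) N)))"
      by (simp add: span_base)
    moreover have "C *v x \<in> span (insert (C *v x) (range ((*v) N)))"
      by (simp add: span_base)
    ultimately show "v \<in> span (insert (C *v x) (range ((*v) N)))"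
      by (simp add: span_add span_mul)
  qed
  moreover have "insert (C *v x) (range ((*v) N)) \<subseteq> span (range ((*v) C))"
    by (auto simp: N_mulv span_base)
  ultimately have "rank C = dim (insert (C *v x) (range ((*v) N)))"
    unfolding rank_dim_range by (metis dim_span span_eq)
  also have "\<dots> = rank N + 1"
    using Cx_notin by (simp add: dim_insert rank_dim_range)
  finally show ?thesis by (simp add: N_def)
qed

lemma rank_Wedderburn_reduction_ones_eq_1:
  fixes C :: "real ^ 'n ^ 'm" and x :: "real ^ 'n" and y :: "real ^ 'm"
  defines "E \<equiv> (1 / ((y v* C) \<bullet> x)) *\<^sub>R outer (C *v x) (y v* C)"
  assumes "(y v* C) \<bullet> x \<noteq> 0" and "rank C < 3" and "C \<notin> Mset"
    and "C *v x = ones \<or> y v* C = ones"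
  shows "rank (C - E) = 1"
proof -
  have "E \<in> Mset"
    using assms(5)
  proof
    assume "C *v x = ones"
    then show ?thesis
      by (simp add: E_def outer_scaleR_right[symmetric] outer_ones_left_in_Mset)
  next
    assume "y v* C = ones"
    then show ?thesis
      by (simp add: E_def outer_scaleR_left[symmetric] outer_ones_right_in_Mset)
  qed
  hence "rank (C - E) \<noteq> 0"
    using \<open>C \<notin> Mset\<close> by (auto simp: rank_eq_0)
  thus ?thesis
    using rank_Wedderburn_reduction[OF assms(2)] \<open>rank C < 3\<close> by (simp add: E_def)
qed

theorem mainTheorem12:
  fixes At Bt D :: "real ^ 'n ^ 'm" and \<gamma> :: real
    and r :: "real ^ 'm" and c :: "real ^ 'n"
  assumes gpos: "\<gamma> > 0"
    and Cdecomp: "At + \<gamma> *\<^sub>R Bt = D + outer r c"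
    and DM: "D \<in> Mset"
    and rankD: "rank D < 2"
    and rankC: "rank (At + \<gamma> *\<^sub>R Bt) < 3"
    and CnotM: "At + \<gamma> *\<^sub>R Bt \<notin> Mset"
  shows
    "(rank D = 0 \<longrightarrow>
        rank (At + \<gamma> *\<^sub>R Bt) = 1 \<and> rank1_game At (\<gamma> *\<^sub>R Bt) \<and>
        strategically_equivalent At Bt At (\<gamma> *\<^sub>R Bt))
   \<and> (rank D = 1 \<and> ones \<in> span (columns (At + \<gamma> *\<^sub>R Bt)) \<longrightarrow>
        (\<exists>x1 y1. (At + \<gamma> *\<^sub>R Bt) *v x1 = ones \<and> (y1 v* (At + \<gamma> *\<^sub>R Bt)) \<bullet> x1 \<noteq> 0) \<and>
        (\<forall>x1 y1. (At + \<gamma> *\<^sub>R Bt) *v x1 = ones \<longrightarrow> (y1 v* (At + \<gamma> *\<^sub>R Bt)) \<bullet> x1 \<noteq> 0 \<longrightarrow>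
          (let w1 = (y1 v* (At + \<gamma> *\<^sub>R Bt)) \<bullet> x1;
               u = (1 / w1) *\<^sub>R (y1 v* (At + \<gamma> *\<^sub>R Bt));
               Ah = At - outer ones u; Bh = \<gamma> *\<^sub>R Bt
           in rank (Ah + Bh) = 1 \<and> rank1_game Ah Bh \<and> strategically_equivalent At Bt Ah Bh)))
   \<and> (rank D = 1 \<and> ones \<in> span (columns (transpose (At + \<gamma> *\<^sub>R Bt))) \<longrightarrow>
        (\<exists>y1 x1. y1 v* (At + \<gamma> *\<^sub>R Bt) = ones \<and> (y1 v* (At + \<gamma> *\<^sub>R Bt)) \<bullet> x1 \<noteq> 0) \<and>
        (\<forall>y1 x1. y1 v* (At + \<gamma> *\<^sub>R Bt) = ones \<longrightarrow> (y1 v* (At + \<gamma> *\<^sub>R Bt)) \<bullet> x1 \<noteq> 0 \<longrightarrow>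
          (let w1 = (y1 v* (At + \<gamma> *\<^sub>R Bt)) \<bullet> x1;
               v = (1 / w1) *\<^sub>R ((At + \<gamma> *\<^sub>R Bt) *v x1);
               Ah = At; Bh = \<gamma> *\<^sub>R Bt - outer v ones
           in rank (Ah + Bh) = 1 \<and> rank1_game Ah Bh \<and> strategically_equivalent At Bt Ah Bh)))"
proof -
  define C where "C = At + \<gamma> *\<^sub>R Bt"
  have C_rank: "rank C < 3" and C_notin: "C \<notin> Mset"
    using rankC CnotM by (simp_all add: C_def)
  have equiv: "strategically_equivalent At Bt (At - outer ones u) (\<gamma> *\<^sub>R Bt - outer v ones)" for u v
    using nash_equilibria_shift_scale[OF gpos] by (simp add: strategically_equivalent_def)
  have "rank C = 1" if "rank D = 0"
  proof -
    have "C = outer r c"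
      using that Cdecomp by (simp add: C_def rank_eq_0)
    moreover have "C \<noteq> 0"
      using C_notin outer_ones_left_in_Mset[of 0] by auto
    ultimately show ?thesis by (simp add: rank_outer_eq_1)
  qed
  moreover have "\<exists>x1 y1. C *v x1 = ones \<and> (y1 v* C) \<bullet> x1 \<noteq> 0"
    if "ones \<in> span (columns C)"
    using that inner_ones_self_neq_0
    by (metis rangeE span_columns_eq_range dot_lmul_matrix)
  moreover have "\<exists>y1 x1. y1 v* C = ones \<and> (y1 v* C) \<bullet> x1 \<noteq> 0"
    if "ones \<in> span (columns (transpose C))"
    using that inner_ones_self_neq_0 span_columns_eq_range[of "transpose C"]
    by (metis rangeE transpose_matrix_vector)
  moreover have "rank (At - outer ones ((1 / ((y1 v* C) \<bullet> x1)) *\<^sub>R (y1 v* C)) + \<gamma> *\<^sub>R Bt) = 1"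
    if "C *v x1 = ones" "(y1 v* C) \<bullet> x1 \<noteq> 0" for x1 y1
    using rank_Wedderburn_reduction_ones_eq_1[of y1 C x1] that C_rank C_notin
    by (simp add: outer_scaleR_right C_def diff_add_eq)
  moreover have "rank (At + (\<gamma> *\<^sub>R Bt - outer ((1 / ((y1 v* C) \<bullet> x1)) *\<^sub>R (C *v x1)) ones)) = 1"
    if "y1 v* C = ones" "(y1 v* C) \<bullet> x1 \<noteq> 0" for x1 y1
    using rank_Wedderburn_reduction_ones_eq_1[of y1 C x1] that C_rank C_notin
    by (simp add: outer_scaleR_left C_def add_diff_eq)
  ultimately show ?thesis
    using equiv[of 0 0] equiv[of _ 0] equiv[of 0]
    by (simp add: Let_def rank1_game_def flip: C_def)
qed

end
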